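(* Let ${\bf Y}$, $d^\pi_Y$, $\xi$ satisfy axioms (1)–(4) and let $d_Y$ be the modified functions defined below. There exist constants ${\boldsymbol\xi}>0$ and $c>0$, depending only on $\xi$, such that for all elements of ${\bf Y}$ (pairwise distinct whenever the quantities require it): (A) $d_Y(X,Z)=d_Y(Z,X)$; (B) $d^\pi_Y(X,Z)-c\le d_Y(X,Z)\le d^\pi_Y(X,Z)$; (C) $d_Y(X,Z)+d_Y(Z,W)\ge d_Y(X,W)-c$; (D) $\min\{d_Y(X,Z),d_Z(X,Y)\}\le c$; (E) for all $X,Z$ the set $\{Y: d_Y(X,Z)\ge{\boldsymbol\xi}\}$ is finite; (F) (monotonicity) if $d_Y(X,Z)\ge{\boldsymbol\xi}$ then $d_W(X,Y)\le d_W(X,Z)$ and $d_W(Z,Y)\le d_W(X,Z)$; (G) (order) the set ${\bf Y}_{\boldsymbol\xi}(X,Z)\cup\{X,Z\}$ carries a total order with least element $X$ and greatest element $Z$ such that, for $Y_0,Y_1,Y_2$ in this set with $Y_1\notin\{X,Z\}$ distinct from $Y_0,Y_2$: if $Y_1$ is between $Y_0$ and $Y_2$ then $d_{Y_1}(X,Z)-c\le d_{Y_1}(Y_0,Y_2)\le d_{Y_1}(X,Z)$, and if not then $d_{Y_1}(Y_0,Y_2)\le c$; (H) (barrier property) if $Y\in{\bf Y}_{\boldsymbol\xi}(X_0,Z)$ and $Y\in{\bf Y}_{\boldsymbol\xi}(X_1,Z)$ then $d_Z(X_0,X_1)<{\boldsymbol\xi}$.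
   Context: Axioms: ${\bf Y}$ is a set, for each $Y\in{\bf Y}$, $d^\pi_Y:({\bf Y}\setminus\{Y\})^2\to[0,\infty)$, and $\xi>0$, with (1) $d^\pi_Y(X,Z)=d^\pi_Y(Z,X)$; (2) $d^\pi_Y(X,Z)+d^\pi_Y(Z,W)\ge d^\pi_Y(X,W)$; (3) for pairwise distinct $X,Y,Z$, $\min\{d^\pi_Y(X,Z),d^\pi_Z(X,Y)\}<\xi$; (4) for all $X,Z$ the set $\{Y:d^\pi_Y(X,Z)\ge\xi\}$ is finite. Let $\mathcal H(X,Z)$ be the set of pairs $(X',Z')$ such that either $d^\pi_X(X',Z')>2\xi$ and $d^\pi_Z(X',Z')>2\xi$; or $X'=X$ and $d^\pi_Z(X,Z')>2\xi$; or $Z'=Z$ and $d^\pi_X(X',Z)>2\xi$; or $(X',Z')=(X,Z)$. Define $d_Y(X,Z)=\inf_{(X',Z')\in\mathcal H(X,Z)}d^\pi_Y(X',Z')$. For $K>0$, ${\bf Y}_K(X,Z)$ denotes the set of $Y\in{\bf Y}\setminus\{X,Z\}$ with $d_Y(X,Z)>K$. *)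

theory Defs
  imports Complex_Main
begin

definition proj_axioms :: "'a set \<Rightarrow> ('a \<Rightarrow> 'a \<Rightarrow> 'a \<Rightarrow> real) \<Rightarrow> real \<Rightarrow> bool" where
  "proj_axioms Ys dpi xi \<longleftrightarrow>
     xi > 0 \<and>
     (\<forall>Y\<in>Ys. \<forall>X\<in>Ys - {Y}. \<forall>Z\<in>Ys - {Y}. 0 \<le> dpi Y X Z) \<and>
     (\<forall>Y\<in>Ys. \<forall>X\<in>Ys - {Y}. \<forall>Z\<in>Ys - {Y}. dpi Y X Z = dpi Y Z X) \<and>
     (\<forall>Y\<in>Ys. \<forall>X\<in>Ys - {Y}. \<forall>Z\<in>Ys - {Y}. \<forall>W\<in>Ys - {Y}.
        dpi Y X Z + dpi Y Z W \<ge> dpi Y X W) \<and>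
     (\<forall>X\<in>Ys. \<forall>Y\<in>Ys. \<forall>Z\<in>Ys. X \<noteq> Y \<and> Y \<noteq> Z \<and> X \<noteq> Z \<longrightarrow>
        min (dpi Y X Z) (dpi Z X Y) < xi) \<and>
     (\<forall>X\<in>Ys. \<forall>Z\<in>Ys. finite {Y \<in> Ys - {X, Z}. dpi Y X Z \<ge> xi})"

text \<open>The set H(X,Z) of admissible replacement pairs (each projection appearing
  is required to be defined, i.e. its arguments differ from its index).\<close>

definition Hpairs :: "'a set \<Rightarrow> ('a \<Rightarrow> 'a \<Rightarrow> 'a \<Rightarrow> real) \<Rightarrow> real \<Rightarrow> 'a \<Rightarrow> 'a \<Rightarrow> ('a \<times> 'a) set" where
  "Hpairs Ys dpi xi X Z = {(X', Z'). X' \<in> Ys \<and> Z' \<in> Ys \<and>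
     ((X' \<noteq> X \<and> Z' \<noteq> X \<and> X' \<noteq> Z \<and> Z' \<noteq> Z \<and>
        dpi X X' Z' > 2 * xi \<and> dpi Z X' Z' > 2 * xi) \<or>
      (X' = X \<and> X \<noteq> Z \<and> Z' \<noteq> Z \<and> dpi Z X Z' > 2 * xi) \<or>
      (Z' = Z \<and> X \<noteq> Z \<and> X' \<noteq> X \<and> dpi X X' Z > 2 * xi) \<or>
      (X' = X \<and> Z' = Z))}"

definition dmod :: "'a set \<Rightarrow> ('a \<Rightarrow> 'a \<Rightarrow> 'a \<Rightarrow> real) \<Rightarrow> real \<Rightarrow> 'a \<Rightarrow> 'a \<Rightarrow> 'a \<Rightarrow> real" where
  "dmod Ys dpi xi Y X Z =
     Inf {dpi Y X' Z' | X' Z'. (X', Z') \<in> Hpairs Ys dpi xi X Z \<and> X' \<noteq> Y \<and> Z' \<noteq> Y}"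

definition Yset :: "'a set \<Rightarrow> ('a \<Rightarrow> 'a \<Rightarrow> 'a \<Rightarrow> real) \<Rightarrow> real \<Rightarrow> real \<Rightarrow> 'a \<Rightarrow> 'a \<Rightarrow> 'a set" where
  "Yset Ys dpi xi K X Z = {Y \<in> Ys - {X, Z}. dmod Ys dpi xi Y X Z > K}"

end

theory Submission
  imports Defs
begin

text \<open>
  By the Behrstock inequality (3), whenever \<open>d\<^sup>\<pi>\<^sub>X(X',Z') > 2\<xi>\<close> every other \<open>Y\<close>
  sees \<open>X\<close> within \<open>\<xi>\<close> of \<open>X'\<close> or of \<open>Z'\<close>. Hence each pair in \<open>\<H>(X,Z)\<close> looks, from any
  \<open>Y\<close>, like \<open>(X,Z)\<close> up to \<open>2\<xi>\<close>, and \<open>d\<^sub>Y\<close> differs from \<open>d\<^sup>\<pi>\<^sub>Y\<close> by at most \<open>2\<xi>\<close>; this gives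
  (A)--(E) and (H). Monotonicity (F) holds because for \<open>d\<^sub>Y(X,Z) > 2\<xi>\<close> every pair in
  \<open>\<H>(X,Z)\<close> also lies in \<open>\<H>(X,Y)\<close> (up to swapping). With \<open>\<xi>\<^sub>b = c = 4\<xi>\<close>, the Yorder in (G) is
  \<open>U < V \<longleftrightarrow> d\<^sup>\<pi>\<^sub>U(V,Z) < \<xi>\<close>: axioms (2) and (3) make it a strict linear order, and seen from
  \<open>Y\<^sub>1\<close>, the points before \<open>Y\<^sub>1\<close> are \<open>\<xi>\<close>-close to \<open>X\<close> and those after it to \<open>Z\<close>.
\<close>

lemma Yset_antimono:
  assumes "K \<le> K'"
  shows "Yset Ys dpi xi K' X Z \<subseteq> Yset Ys dpi xi K X Z"
  using assms unfolding Yset_def by auto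

locale projection_system =
  fixes Ys :: "'a set" and dpi :: "'a \<Rightarrow> 'a \<Rightarrow> 'a \<Rightarrow> real" and xi :: real
  assumes axioms: "proj_axioms Ys dpi xi"
begin

abbreviation "d \<equiv> dmod Ys dpi xi"
abbreviation "H \<equiv> Hpairs Ys dpi xi"

lemma xi_pos: "xi > 0"
  using axioms by (simp add: proj_axioms_def)

lemma proj_nonneg:
  "\<lbrakk>Y \<in> Ys; X \<in> Ys; Z \<in> Ys; X \<noteq> Y; Z \<noteq> Y\<rbrakk> \<Longrightarrow> 0 \<le> dpi Y X Z"
  using axioms by (simp add: proj_axioms_def)

lemma proj_commute:
  "\<lbrakk>Y \<in> Ys; X \<in> Ys; Z \<in> Ys; X \<noteq> Y; Z \<noteq> Y\<rbrakk> \<Longrightarrow> dpi Y X Z = dpi Y Z X"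
  using axioms by (simp add: proj_axioms_def)

lemma proj_triangle:
  "\<lbrakk>Y \<in> Ys; X \<in> Ys; Z \<in> Ys; W \<in> Ys; X \<noteq> Y; Z \<noteq> Y; W \<noteq> Y\<rbrakk>
    \<Longrightarrow> dpi Y X W \<le> dpi Y X Z + dpi Y Z W"
  using axioms unfolding proj_axioms_def by blast

lemma proj_behrstock:
  "\<lbrakk>X \<in> Ys; Y \<in> Ys; Z \<in> Ys; X \<noteq> Y; Y \<noteq> Z; X \<noteq> Z\<rbrakk> \<Longrightarrow> dpi Y X Z < xi \<or> dpi Z X Y < xi"
  using axioms unfolding proj_axioms_def by force

lemma proj_finite: "\<lbrakk>X \<in> Ys; Z \<in> Ys\<rbrakk> \<Longrightarrow> finite {Y \<in> Ys - {X, Z}. xi \<le> dpi Y X Z}"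
  using axioms unfolding proj_axioms_def by blast

lemma Hpairs_iff:
  "(a, b) \<in> H X Z \<longleftrightarrow> a \<in> Ys \<and> b \<in> Ys \<and>
     ((a \<noteq> X \<and> b \<noteq> X \<and> a \<noteq> Z \<and> b \<noteq> Z \<and> dpi X a b > 2 * xi \<and> dpi Z a b > 2 * xi) \<or>
      (a = X \<and> X \<noteq> Z \<and> b \<noteq> Z \<and> dpi Z X b > 2 * xi) \<or>
      (b = Z \<and> X \<noteq> Z \<and> a \<noteq> X \<and> dpi X a Z > 2 * xi) \<or>
      (a = X \<and> b = Z))"
  by (simp add: Hpairs_def)

lemma Hpairs_swap: "\<lbrakk>(a, b) \<in> H X Z; X \<in> Ys; Z \<in> Ys\<rbrakk> \<Longrightarrow> (b, a) \<in> H Z X"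
  unfolding Hpairs_iff using proj_commute[of X a b] proj_commute[of Z a b]
    proj_commute[of X a Z] proj_commute[of Z X b] by auto

lemma dmod_le_proj_pair:
  assumes "(a, b) \<in> H X Z" "a \<noteq> Y" "b \<noteq> Y" "Y \<in> Ys"
  shows "d Y X Z \<le> dpi Y a b"
  unfolding dmod_def
proof (rule cInf_lower)
  show "bdd_below {dpi Y X' Z' |X' Z'. (X', Z') \<in> H X Z \<and> X' \<noteq> Y \<and> Z' \<noteq> Y}"
    by (rule bdd_belowI[of _ 0]) (auto simp: Hpairs_iff intro: proj_nonneg[OF assms(4)])
qed (use assms in blast)

lemma dmod_greatest:
  assumes "Y \<in> Ys" "X \<in> Ys" "Z \<in> Ys" "Y \<noteq> X" "Y \<noteq> Z"
    and "\<And>a b. \<lbrakk>(a, b) \<in> H X Z; a \<noteq> Y; b \<noteq> Y\<rbrakk> \<Longrightarrow> m \<le> dpi Y a b"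
  shows "m \<le> d Y X Z"
  unfolding dmod_def
proof (rule cInf_greatest)
  have "(X, Z) \<in> H X Z" using assms by (simp add: Hpairs_iff)
  then show "{dpi Y X' Z' |X' Z'. (X', Z') \<in> H X Z \<and> X' \<noteq> Y \<and> Z' \<noteq> Y} \<noteq> {}"
    using assms by blast
qed (use assms(6) in blast)

lemma dmod_le_proj:
  "\<lbrakk>Y \<in> Ys; X \<in> Ys; Z \<in> Ys; Y \<noteq> X; Y \<noteq> Z\<rbrakk> \<Longrightarrow> d Y X Z \<le> dpi Y X Z"
  by (rule dmod_le_proj_pair) (auto simp: Hpairs_iff)

lemma dmod_commute:
  assumes "Y \<in> Ys" "X \<in> Ys" "Z \<in> Ys" "Y \<noteq> X" "Y \<noteq> Z"
  shows "d Y X Z = d Y Z X"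
proof -
  have le: "d Y B A \<le> d Y A B" if "A \<in> Ys" "B \<in> Ys" "Y \<noteq> A" "Y \<noteq> B" for A B
  proof (rule dmod_greatest[OF assms(1) that])
    fix a b assume ab: "(a, b) \<in> H A B" "a \<noteq> Y" "b \<noteq> Y"
    then have "(b, a) \<in> H B A" "a \<in> Ys" "b \<in> Ys"
      using Hpairs_swap that by (auto simp: Hpairs_iff)
    then show "d Y B A \<le> dpi Y a b"
      using dmod_le_proj_pair[of b a B A Y] proj_commute[OF assms(1)] ab assms(1) by metis
  qed
  show ?thesis using le[of X Z] le[of Z X] assms by fastforce
qed

subsection \<open>Closeness in a projection\<close>

text \<open>The disjunct \<open>A = B\<close> is needed: the axioms do not force \<open>d\<^sup>\<pi>\<^sub>Y(A,A) = 0\<close>.\<close>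

definition proj_close :: "'a \<Rightarrow> 'a \<Rightarrow> 'a \<Rightarrow> bool" where
  "proj_close Y A B \<longleftrightarrow> A = B \<or> dpi Y A B < xi"

lemma proj_close_commute:
  "\<lbrakk>Y \<in> Ys; A \<in> Ys; B \<in> Ys; A \<noteq> Y; B \<noteq> Y\<rbrakk> \<Longrightarrow> proj_close Y A B \<longleftrightarrow> proj_close Y B A"
  unfolding proj_close_def using proj_commute by auto

lemma proj_shift_close:
  assumes "Y \<in> Ys" "A \<in> Ys" "A' \<in> Ys" "B \<in> Ys" "A \<noteq> Y" "A' \<noteq> Y" "B \<noteq> Y"
    and "proj_close Y A A'"
  shows "dpi Y A B \<le> dpi Y A' B + xi"
proof (cases "A = A'")
  case False
  then have "dpi Y A A' < xi" using assms(8) by (simp add: proj_close_def)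
  then show ?thesis using proj_triangle[of Y A A' B] assms by linarith
qed (use xi_pos in simp)

lemma proj_le_of_close:
  assumes "Y \<in> Ys" "X \<in> Ys" "Z \<in> Ys" "A \<in> Ys" "B \<in> Ys"
    and "X \<noteq> Y" "Z \<noteq> Y" "A \<noteq> Y" "B \<noteq> Y"
    and "proj_close Y X A" "proj_close Y Z B"
  shows "dpi Y X Z \<le> dpi Y A B + 2 * xi"
proof -
  have "dpi Y X Z \<le> dpi Y A Z + xi" using proj_shift_close[of Y X A Z] assms by blast
  also have "dpi Y A Z = dpi Y Z A" using proj_commute assms by blast
  also have "dpi Y Z A \<le> dpi Y B A + xi" using proj_shift_close[of Y Z B A] assms by blast
  also have "dpi Y B A = dpi Y A B" using proj_commute assms by blast
  finally show ?thesis by simp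
qed

lemma proj_lt_of_close:
  assumes "Y \<in> Ys" "A \<in> Ys" "B \<in> Ys" "C \<in> Ys" "A \<noteq> Y" "B \<noteq> Y" "C \<noteq> Y" "A \<noteq> B"
    and "proj_close Y A C" "proj_close Y B C"
  shows "dpi Y A B < 2 * xi"
proof -
  have AC: "A \<noteq> C \<Longrightarrow> dpi Y A C < xi" and BC: "B \<noteq> C \<Longrightarrow> dpi Y C B < xi"
    using assms proj_commute[of Y B C] by (auto simp: proj_close_def)
  consider "A = C" | "B = C" | "A \<noteq> C" "B \<noteq> C" by blast
  then show ?thesis
  proof cases
    case 3
    then show ?thesis using proj_triangle[of Y A C B] AC BC assms by fastforce
  qed (use AC BC assms xi_pos in auto)
qed

lemma close_of_proj_gt:
  assumes "X \<in> Ys" "a \<in> Ys" "b \<in> Ys" "Y \<in> Ys" "a \<noteq> X" "b \<noteq> X" "dpi X a b > 2 * xi"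
    and "Y \<noteq> X" "Y \<noteq> a" "Y \<noteq> b"
  shows "proj_close Y X a \<or> proj_close Y X b"
proof -
  have "dpi X a b \<le> dpi X a Y + dpi X Y b" using proj_triangle[of X a Y b] assms by blast
  then have "dpi X a Y > xi \<or> dpi X Y b > xi" using assms(7) by linarith
  moreover have "dpi Y a X < xi \<or> dpi X a Y < xi" using proj_behrstock[of a Y X] assms by auto
  moreover have "dpi Y b X < xi \<or> dpi X b Y < xi" using proj_behrstock[of b Y X] assms by auto
  moreover have "dpi Y a X = dpi Y X a" "dpi Y b X = dpi Y X b" "dpi X b Y = dpi X Y b"
    using proj_commute[of Y a X] proj_commute[of Y b X] proj_commute[of X b Y] assms by auto
  ultimately show ?thesis unfolding proj_close_def by linarith
qed

lemma Hpairs_close: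
  assumes "(a, b) \<in> H X Z" "X \<in> Ys" "Z \<in> Ys" "Y \<in> Ys"
    and "Y \<noteq> X" "Y \<noteq> Z" "Y \<noteq> a" "Y \<noteq> b"
  shows "proj_close Y X a \<or> proj_close Y X b" "proj_close Y Z a \<or> proj_close Y Z b"
proof -
  have ab: "a \<in> Ys" "b \<in> Ys" using assms(1) by (auto simp: Hpairs_iff)
  consider (far) "a \<noteq> X" "b \<noteq> X" "a \<noteq> Z" "b \<noteq> Z" "dpi X a b > 2 * xi" "dpi Z a b > 2 * xi"
    | (left) "a = X" "X \<noteq> Z" "b \<noteq> Z" "dpi Z X b > 2 * xi"
    | (right) "b = Z" "X \<noteq> Z" "a \<noteq> X" "dpi X a Z > 2 * xi"
    | (ends) "a = X" "b = Z"
    using assms(1) unfolding Hpairs_iff by argo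
  then have "(proj_close Y X a \<or> proj_close Y X b) \<and> (proj_close Y Z a \<or> proj_close Y Z b)"
  proof cases
    case far
    then show ?thesis using close_of_proj_gt[of X a b Y] close_of_proj_gt[of Z a b Y] assms ab by blast
  next
    case left
    then show ?thesis using close_of_proj_gt[of Z X b Y] assms ab by (auto simp: proj_close_def)
  next
    case right
    then show ?thesis using close_of_proj_gt[of X a Z Y] assms ab by (auto simp: proj_close_def)
  qed (auto simp: proj_close_def)
  then show "proj_close Y X a \<or> proj_close Y X b" "proj_close Y Z a \<or> proj_close Y Z b" by auto
qed

lemma proj_le_Hpair_add:
  assumes "(a, b) \<in> H X Z" "X \<in> Ys" "Z \<in> Ys" "Y \<in> Ys" "X \<noteq> Z"
    and "Y \<noteq> X" "Y \<noteq> Z" "Y \<noteq> a" "Y \<noteq> b"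
  shows "dpi Y X Z \<le> dpi Y a b + 2 * xi"
proof -
  have ab: "a \<in> Ys" "b \<in> Ys" using assms(1) by (auto simp: Hpairs_iff)
  note close = Hpairs_close[OF assms(1-4,6-9)]
  have nonneg: "0 \<le> dpi Y a b" using proj_nonneg assms ab by auto
  have ba: "dpi Y b a = dpi Y a b" using proj_commute assms ab by auto
  show ?thesis
    using close proj_le_of_close[of Y X Z a b] proj_le_of_close[of Y X Z b a]
      proj_lt_of_close[of Y X Z a] proj_lt_of_close[of Y X Z b] nonneg ba assms ab
    by fastforce
qed

lemma proj_le_dmod_add:
  "\<lbrakk>Y \<in> Ys; X \<in> Ys; Z \<in> Ys; Y \<noteq> X; Y \<noteq> Z; X \<noteq> Z\<rbrakk> \<Longrightarrow> dpi Y X Z \<le> d Y X Z + 2 * xi"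
  using dmod_greatest[of Y X Z "dpi Y X Z - 2 * xi"] proj_le_Hpair_add[of _ _ X Z Y] by fastforce

lemma dmod_triangle:
  assumes "Y \<in> Ys" "X \<in> Ys" "Z \<in> Ys" "W \<in> Ys" "distinct [X, Y, Z, W]"
  shows "d Y X W \<le> d Y X Z + d Y Z W + 4 * xi"
proof -
  have "d Y X W \<le> dpi Y X W" using dmod_le_proj assms by auto
  also have "\<dots> \<le> dpi Y X Z + dpi Y Z W" using proj_triangle assms by auto
  also have "\<dots> \<le> d Y X Z + d Y Z W + 4 * xi"
    using proj_le_dmod_add[of Y X Z] proj_le_dmod_add[of Y Z W] assms by fastforce
  finally show ?thesis .
qed

lemma dmod_behrstock:
  "\<lbrakk>X \<in> Ys; Y \<in> Ys; Z \<in> Ys; X \<noteq> Y; Y \<noteq> Z; X \<noteq> Z\<rbrakk> \<Longrightarrow> d Y X Z < xi \<or> d Z X Y < xi"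
  using proj_behrstock[of X Y Z] dmod_le_proj[of Y X Z] dmod_le_proj[of Z X Y] by fastforce

lemma dmod_finite:
  assumes "X \<in> Ys" "Z \<in> Ys" "xi \<le> K"
  shows "finite {Y \<in> Ys - {X, Z}. K \<le> d Y X Z}"
proof (rule finite_subset[OF _ proj_finite[OF assms(1,2)]])
  show "{Y \<in> Ys - {X, Z}. K \<le> d Y X Z} \<subseteq> {Y \<in> Ys - {X, Z}. xi \<le> dpi Y X Z}"
    using dmod_le_proj assms by fastforce
qed

lemma dmod_barrier:
  assumes "X0 \<in> Ys" "X1 \<in> Ys" "Z \<in> Ys" "Z \<noteq> X0" "Z \<noteq> X1" "xi \<le> K"
    and "Y \<in> Yset Ys dpi xi K X0 Z" "Y \<in> Yset Ys dpi xi K X1 Z"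
  shows "d Z X0 X1 < 2 * xi"
proof -
  have Y: "Y \<in> Ys" "Y \<noteq> X0" "Y \<noteq> X1" "Y \<noteq> Z" "d Y X0 Z > xi" "d Y X1 Z > xi"
    using assms unfolding Yset_def by auto
  have "dpi Z X0 Y < xi" "dpi Z X1 Y < xi"
    using dmod_le_proj[of Y X0 Z] dmod_le_proj[of Y X1 Z] proj_behrstock[of X0 Y Z]
      proj_behrstock[of X1 Y Z] assms Y by force+
  moreover have "dpi Z X0 X1 \<le> dpi Z X0 Y + dpi Z Y X1" using proj_triangle assms Y by auto
  moreover have "dpi Z Y X1 = dpi Z X1 Y" using proj_commute assms Y by auto
  moreover have "d Z X0 X1 \<le> dpi Z X0 X1" using dmod_le_proj assms by auto
  ultimately show ?thesis by linarith
qed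

subsection \<open>Monotonicity\<close>

lemma Hpairs_far_from_Yset:
  assumes "U \<in> Yset Ys dpi xi (2 * xi) X Z \<union> {X, Z}" "(a, b) \<in> H X Z"
  shows "U = a \<or> U = b \<or> 2 * xi < dpi U a b"
  using assms dmod_le_proj_pair[OF assms(2), of U] unfolding Yset_def Hpairs_iff by force

lemma Hpairs_transfer:
  assumes "A \<in> Ys" "B \<in> Ys" "A \<noteq> B" "a \<in> Ys" "b \<in> Ys"
    and "A = a \<or> A = b \<or> 2 * xi < dpi A a b" "B = a \<or> B = b \<or> 2 * xi < dpi B a b"
  shows "(a, b) \<in> H A B \<or> (b, a) \<in> H A B"
  using assms proj_commute[of B a b] proj_commute[of A a b] unfolding Hpairs_iff by auto

lemma dmod_mono:
  assumes "X \<in> Ys" "Z \<in> Ys" "W \<in> Ys"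
    and "A \<in> Yset Ys dpi xi (2 * xi) X Z \<union> {X, Z}" "B \<in> Yset Ys dpi xi (2 * xi) X Z \<union> {X, Z}"
    and "A \<noteq> B" "W \<noteq> A" "W \<noteq> B" "W \<noteq> X" "W \<noteq> Z"
  shows "d W A B \<le> d W X Z"
proof (rule dmod_greatest)
  fix a b assume h: "(a, b) \<in> H X Z" "a \<noteq> W" "b \<noteq> W"
  have ab: "a \<in> Ys" "b \<in> Ys" using h(1) by (auto simp: Hpairs_iff)
  have AB: "A \<in> Ys" "B \<in> Ys" using assms unfolding Yset_def by auto
  have "(a, b) \<in> H A B \<or> (b, a) \<in> H A B"
    using Hpairs_transfer[OF AB assms(6) ab Hpairs_far_from_Yset[OF _ h(1)]
        Hpairs_far_from_Yset[OF _ h(1)]] assms(4,5) .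
  moreover have "dpi W b a = dpi W a b" using proj_commute h ab assms by auto
  ultimately show "d W A B \<le> dpi W a b"
    using dmod_le_proj_pair[of a b A B W] dmod_le_proj_pair[of b a A B W] h assms by auto
qed (use assms in auto)

end

subsection \<open>The order on \<open>\<Y>\<^sub>4\<^sub>\<xi>(X,Z)\<close>\<close>

locale projection_pair = projection_system +
  fixes X Z
  assumes X: "X \<in> Ys" and Z: "Z \<in> Ys" and X_neq_Z: "X \<noteq> Z"
begin

abbreviation "Yfar \<equiv> Yset Ys dpi xi (4 * xi) X Z"
abbreviation "Yfar_ends \<equiv> Yfar \<union> {X, Z}"

definition precedes :: "'a \<Rightarrow> 'a \<Rightarrow> bool" where
  "precedes U V \<longleftrightarrow> dpi U V Z < xi"

definition Yorder :: "('a \<times> 'a) set" where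
  "Yorder = {(U, V). U \<in> Yfar_ends \<and> V \<in> Yfar_ends \<and>
     (U = V \<or> U = X \<or> V = Z \<or> (U \<in> Yfar \<and> V \<in> Yfar \<and> precedes U V))}"

lemma YfarD:
  assumes "U \<in> Yfar"
  shows "U \<in> Ys" "U \<noteq> X" "U \<noteq> Z" "d U X Z > 4 * xi" "dpi U X Z > 4 * xi"
proof -
  show U: "U \<in> Ys" "U \<noteq> X" "U \<noteq> Z" "d U X Z > 4 * xi" using assms unfolding Yset_def by auto
  then show "dpi U X Z > 4 * xi" using dmod_le_proj[OF U(1) X Z] by force
qed

lemma Yfar_ends_memD: "U \<in> Yfar_ends \<Longrightarrow> U \<in> Ys"
  using YfarD X Z by auto

lemma precedes_imp_proj_lt:
  assumes "U \<in> Yfar" "V \<in> Yfar" "U \<noteq> V" "precedes V U"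
  shows "dpi U X V < xi"
proof -
  note u = YfarD[OF assms(1)] and v = YfarD[OF assms(2)]
  have "dpi V X Z \<le> dpi V X U + dpi V U Z" using proj_triangle u v assms X Z by auto
  then have "dpi V X U > 3 * xi" using assms(4) v(5) unfolding precedes_def by linarith
  then show ?thesis using proj_behrstock[of X U V] u v assms X xi_pos by force
qed

lemma precedes_total:
  assumes "U \<in> Yfar" "V \<in> Yfar" "U \<noteq> V"
  shows "precedes U V \<or> precedes V U"
proof -
  note u = YfarD[OF assms(1)] and v = YfarD[OF assms(2)]
  have "dpi U Z V < xi \<or> dpi V Z U < xi" using proj_behrstock[of Z U V] u v assms Z by auto
  moreover have "dpi V Z U = dpi V U Z" "dpi U Z V = dpi U V Z"
    using proj_commute u v assms Z by auto
  ultimately show ?thesis unfolding precedes_def by auto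
qed

lemma precedes_asym:
  assumes "U \<in> Yfar" "V \<in> Yfar" "U \<noteq> V" "precedes U V"
  shows "\<not> precedes V U"
proof
  assume "precedes V U"
  then have "dpi U X V < xi" using precedes_imp_proj_lt assms by blast
  moreover have "dpi U X Z \<le> dpi U X V + dpi U V Z"
    using proj_triangle YfarD[OF assms(1)] YfarD[OF assms(2)] assms X Z by auto
  ultimately show False using assms(4) YfarD(5)[OF assms(1)] xi_pos unfolding precedes_def by linarith
qed

lemma precedes_trans:
  assumes "U \<in> Yfar" "V \<in> Yfar" "W \<in> Yfar" "U \<noteq> V" "V \<noteq> W" "U \<noteq> W"
    and UV: "precedes U V" and VW: "precedes V W"
  shows "precedes U W"
proof (rule ccontr)
  assume "\<not> precedes U W"
  note u = YfarD[OF assms(1)] and v = YfarD[OF assms(2)] and w = YfarD[OF assms(3)]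
  have UXW: "dpi U X W < xi"
    using precedes_total \<open>\<not> precedes U W\<close> precedes_imp_proj_lt assms by blast
  have VXU: "dpi V X U < xi" using precedes_imp_proj_lt assms by blast
  have "dpi V X Z \<le> dpi V X U + dpi V U Z" using proj_triangle u v w assms X Z by auto
  moreover have "dpi V U Z \<le> dpi V U W + dpi V W Z" using proj_triangle u v w assms Z by auto
  ultimately have "dpi V U W > 2 * xi" using VXU VW v(5) unfolding precedes_def by linarith
  moreover have "dpi V W U = dpi V U W" using proj_commute u v w assms by auto
  ultimately have UWV: "dpi U W V < xi" using proj_behrstock[of W V U] u v w assms xi_pos by force
  have "dpi U X Z \<le> dpi U X W + dpi U W Z" using proj_triangle u v w assms X Z by auto
  moreover have "dpi U W Z \<le> dpi U W V + dpi U V Z" using proj_triangle u v w assms Z by auto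
  ultimately show False using UXW UWV UV u(5) xi_pos unfolding precedes_def by linarith
qed

lemma Yorder_linear: "linear_order_on Yfar_ends Yorder"
proof -
  have X_Z_notin: "X \<notin> Yfar" "Z \<notin> Yfar" using YfarD by auto
  have "trans Yorder"
  proof (rule transI)
    fix U V W assume UV: "(U, V) \<in> Yorder" and VW: "(V, W) \<in> Yorder"
    show "(U, W) \<in> Yorder"
    proof (cases "U = V \<or> V = W \<or> U = X \<or> W = Z \<or> U = W")
      case False
      then have "V \<noteq> Z" "V \<noteq> X" using UV VW X_neq_Z X_Z_notin unfolding Yorder_def by auto
      then show ?thesis using UV VW False precedes_trans[of U V W] unfolding Yorder_def by auto
    qed (use UV VW in \<open>auto simp: Yorder_def\<close>)
  qed
  moreover have "antisym Yorder"
    using precedes_asym X_neq_Z X_Z_notin unfolding Yorder_def antisym_def by blast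
  moreover have "total_on Yfar_ends Yorder"
    using precedes_total X_neq_Z X_Z_notin unfolding total_on_def Yorder_def by auto
  moreover have "refl_on Yfar_ends Yorder" "Yorder \<subseteq> Yfar_ends \<times> Yfar_ends"
    unfolding refl_on_def Yorder_def by auto
  ultimately show ?thesis
    unfolding linear_order_on_def partial_order_on_def preorder_on_def by blast
qed

lemma Yorder_ends: "U \<in> Yfar_ends \<Longrightarrow> (X, U) \<in> Yorder \<and> (U, Z) \<in> Yorder"
  unfolding Yorder_def by auto

lemma Yorder_below_close:
  assumes "Y \<in> Yfar" "V \<in> Yfar_ends" "V \<noteq> Y" "(V, Y) \<in> Yorder"
  shows "proj_close Y X V"
proof (cases "V = X")
  case False
  then have "V \<in> Yfar \<and> precedes V Y"
    using assms X_neq_Z YfarD(3)[OF assms(1)] unfolding Yorder_def by auto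
  then show ?thesis using precedes_imp_proj_lt assms unfolding proj_close_def by auto
qed (simp add: proj_close_def)

lemma Yorder_above_close:
  assumes "Y \<in> Yfar" "V \<in> Yfar_ends" "V \<noteq> Y" "(Y, V) \<in> Yorder"
  shows "proj_close Y Z V"
proof (cases "V = Z")
  case False
  then have "V \<in> Yfar \<and> precedes Y V"
    using assms X_neq_Z YfarD(2)[OF assms(1)] unfolding Yorder_def by auto
  then show ?thesis
    using proj_commute[of Y V Z] YfarD[OF assms(1)] Yfar_ends_memD assms Z
    unfolding proj_close_def precedes_def by auto
qed (simp add: proj_close_def)

lemma Yorder_between_dmod_ge:
  assumes "Y0 \<in> Yfar_ends" "Y1 \<in> Yfar" "Y2 \<in> Yfar_ends" "Y1 \<noteq> Y0" "Y1 \<noteq> Y2" "Y0 \<noteq> Y2"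
    and "(Y0, Y1) \<in> Yorder" "(Y1, Y2) \<in> Yorder"
  shows "d Y1 X Z - 4 * xi \<le> d Y1 Y0 Y2"
proof -
  note y1 = YfarD[OF assms(2)] and mem = Yfar_ends_memD[OF assms(1)] Yfar_ends_memD[OF assms(3)]
  have "d Y1 X Z \<le> dpi Y1 X Z" using dmod_le_proj y1 X Z by auto
  also have "\<dots> \<le> dpi Y1 Y0 Y2 + 2 * xi"
    using proj_le_of_close Yorder_below_close Yorder_above_close assms y1 mem X Z by auto
  also have "\<dots> \<le> d Y1 Y0 Y2 + 4 * xi" using proj_le_dmod_add y1 mem assms by fastforce
  finally show ?thesis by simp
qed

lemma Yorder_outside_dmod_le:
  assumes "Y0 \<in> Yfar_ends" "Y1 \<in> Yfar" "Y2 \<in> Yfar_ends" "Y1 \<noteq> Y0" "Y1 \<noteq> Y2" "Y0 \<noteq> Y2"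
    and "((Y0, Y1) \<in> Yorder \<and> (Y2, Y1) \<in> Yorder) \<or> ((Y1, Y0) \<in> Yorder \<and> (Y1, Y2) \<in> Yorder)"
  shows "d Y1 Y0 Y2 \<le> 4 * xi"
proof -
  note y1 = YfarD[OF assms(2)] and mem = Yfar_ends_memD[OF assms(1)] Yfar_ends_memD[OF assms(3)]
  have "proj_close Y1 Y0 X \<and> proj_close Y1 Y2 X \<or> proj_close Y1 Y0 Z \<and> proj_close Y1 Y2 Z"
    using assms Yorder_below_close Yorder_above_close proj_close_commute y1 mem X Z by metis
  then have "dpi Y1 Y0 Y2 < 2 * xi"
    using proj_lt_of_close[of Y1 Y0 Y2] y1 mem assms X Z by auto
  then show ?thesis using dmod_le_proj[of Y1 Y0 Y2] y1 mem assms xi_pos by force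
qed

lemma Yorder_dmod_le:
  assumes "Y0 \<in> Yfar_ends" "Y1 \<in> Yfar" "Y2 \<in> Yfar_ends" "Y1 \<noteq> Y0" "Y1 \<noteq> Y2" "Y0 \<noteq> Y2"
  shows "d Y1 Y0 Y2 \<le> d Y1 X Z"
proof -
  have "Yfar \<subseteq> Yset Ys dpi xi (2 * xi) X Z"
    using Yset_antimono[of "2 * xi" "4 * xi" Ys dpi xi X Z] xi_pos by simp
  then show ?thesis using dmod_mono[of X Z Y1 Y0 Y2] YfarD[OF assms(2)] assms X Z by blast
qed

lemma Yfar_Yorder_exists:
  "\<exists>R. linear_order_on Yfar_ends R \<and>
     (\<forall>U\<in>Yfar_ends. (X, U) \<in> R \<and> (U, Z) \<in> R) \<and>
     (\<forall>Y0\<in>Yfar_ends. \<forall>Y1\<in>Yfar_ends. \<forall>Y2\<in>Yfar_ends.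
        Y1 \<notin> {X, Z} \<and> Y1 \<noteq> Y0 \<and> Y1 \<noteq> Y2 \<and> Y0 \<noteq> Y2 \<longrightarrow>
        (if ((Y0, Y1) \<in> R \<and> (Y1, Y2) \<in> R) \<or> ((Y2, Y1) \<in> R \<and> (Y1, Y0) \<in> R)
         then d Y1 X Z - 4 * xi \<le> d Y1 Y0 Y2 \<and> d Y1 Y0 Y2 \<le> d Y1 X Z
         else d Y1 Y0 Y2 \<le> 4 * xi))"
proof (intro exI[of _ Yorder] conjI ballI impI Yorder_linear)
  fix Y0 Y1 Y2
  assume Ys: "Y0 \<in> Yfar_ends" "Y1 \<in> Yfar_ends" "Y2 \<in> Yfar_ends"
    and ne: "Y1 \<notin> {X, Z} \<and> Y1 \<noteq> Y0 \<and> Y1 \<noteq> Y2 \<and> Y0 \<noteq> Y2"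
  then have Y1: "Y1 \<in> Yfar" by auto
  have total: "(V, Y1) \<in> Yorder \<or> (Y1, V) \<in> Yorder" if "V \<in> Yfar_ends" "V \<noteq> Y1" for V
    using Yorder_linear that Ys unfolding linear_order_on_def total_on_def by blast
  have reversed: "d Y1 X Z - 4 * xi \<le> d Y1 Y0 Y2"
    if "(Y2, Y1) \<in> Yorder" "(Y1, Y0) \<in> Yorder"
    using Yorder_between_dmod_ge[of Y2 Y1 Y0] dmod_commute[of Y1 Y2 Y0] Yfar_ends_memD that Ys ne Y1
    by auto
  show "if ((Y0, Y1) \<in> Yorder \<and> (Y1, Y2) \<in> Yorder) \<or> ((Y2, Y1) \<in> Yorder \<and> (Y1, Y0) \<in> Yorder)
        then d Y1 X Z - 4 * xi \<le> d Y1 Y0 Y2 \<and> d Y1 Y0 Y2 \<le> d Y1 X Z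
        else d Y1 Y0 Y2 \<le> 4 * xi"
    using Yorder_between_dmod_ge[of Y0 Y1 Y2] reversed Yorder_dmod_le[of Y0 Y1 Y2]
      Yorder_outside_dmod_le[of Y0 Y1 Y2] total[of Y0] total[of Y2] Ys ne Y1
    by auto
qed (use Yorder_ends in auto)

end

theorem theorem2p3:
  fixes xi :: real
  assumes "xi > 0"
  shows "\<exists>bxi c :: real. bxi > 0 \<and> c > 0 \<and>
    (\<forall>(Ys :: 'a set) dpi. proj_axioms Ys dpi xi \<longrightarrow>
      (let d = dmod Ys dpi xi in
       \<comment> \<open>(A)\<close>
       (\<forall>X\<in>Ys. \<forall>Y\<in>Ys. \<forall>Z\<in>Ys. X \<noteq> Y \<and> Y \<noteq> Z \<and> X \<noteq> Z \<longrightarrow>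
          d Y X Z = d Y Z X) \<and>
       \<comment> \<open>(B)\<close>
       (\<forall>X\<in>Ys. \<forall>Y\<in>Ys. \<forall>Z\<in>Ys. X \<noteq> Y \<and> Y \<noteq> Z \<and> X \<noteq> Z \<longrightarrow>
          dpi Y X Z - c \<le> d Y X Z \<and> d Y X Z \<le> dpi Y X Z) \<and>
       \<comment> \<open>(C)\<close>
       (\<forall>X\<in>Ys. \<forall>Y\<in>Ys. \<forall>Z\<in>Ys. \<forall>W\<in>Ys. distinct [X, Y, Z, W] \<longrightarrow>
          d Y X Z + d Y Z W \<ge> d Y X W - c) \<and>
       \<comment> \<open>(D)\<close>
       (\<forall>X\<in>Ys. \<forall>Y\<in>Ys. \<forall>Z\<in>Ys. X \<noteq> Y \<and> Y \<noteq> Z \<and> X \<noteq> Z \<longrightarrow>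
          min (d Y X Z) (d Z X Y) \<le> c) \<and>
       \<comment> \<open>(E)\<close>
       (\<forall>X\<in>Ys. \<forall>Z\<in>Ys. X \<noteq> Z \<longrightarrow> finite {Y \<in> Ys - {X, Z}. d Y X Z \<ge> bxi}) \<and>
       \<comment> \<open>(F)\<close>
       (\<forall>X\<in>Ys. \<forall>Y\<in>Ys. \<forall>Z\<in>Ys. \<forall>W\<in>Ys. distinct [X, Y, Z, W] \<longrightarrow>
          d Y X Z \<ge> bxi \<longrightarrow> d W X Y \<le> d W X Z \<and> d W Z Y \<le> d W X Z) \<and>
       \<comment> \<open>(G)\<close>
       (\<forall>X\<in>Ys. \<forall>Z\<in>Ys. X \<noteq> Z \<longrightarrow>
          (let S = Yset Ys dpi xi bxi X Z \<union> {X, Z} in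
           \<exists>R. linear_order_on S R \<and>
             (\<forall>U\<in>S. (X, U) \<in> R \<and> (U, Z) \<in> R) \<and>
             (\<forall>Y0\<in>S. \<forall>Y1\<in>S. \<forall>Y2\<in>S.
                Y1 \<notin> {X, Z} \<and> Y1 \<noteq> Y0 \<and> Y1 \<noteq> Y2 \<and> Y0 \<noteq> Y2 \<longrightarrow>
                (if ((Y0, Y1) \<in> R \<and> (Y1, Y2) \<in> R) \<or> ((Y2, Y1) \<in> R \<and> (Y1, Y0) \<in> R)
                 then d Y1 X Z - c \<le> d Y1 Y0 Y2 \<and> d Y1 Y0 Y2 \<le> d Y1 X Z
                 else d Y1 Y0 Y2 \<le> c)))) \<and>
       \<comment> \<open>(H)\<close>
       (\<forall>X0\<in>Ys. \<forall>X1\<in>Ys. \<forall>Z\<in>Ys. \<forall>Y\<in>Ys.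
          X0 \<noteq> X1 \<and> Y \<in> Yset Ys dpi xi bxi X0 Z \<and> Y \<in> Yset Ys dpi xi bxi X1 Z \<and>
          Z \<noteq> X0 \<and> Z \<noteq> X1 \<longrightarrow> d Z X0 X1 < bxi)))"
proof (intro exI[of _ "4 * xi"] conjI allI impI, goal_cases)
  case (3 Ys dpi)
  interpret projection_system Ys dpi xi using 3 by unfold_locales
  have far: "2 * xi < 4 * xi" "xi \<le> 4 * xi" using assms by auto
  show ?case unfolding Let_def
  proof (intro conjI ballI impI, goal_cases)
    case 1 then show ?case using dmod_commute by blast
  next case (2 X Y Z) then show ?case using proj_le_dmod_add[of Y X Z] assms by force
  next case 3 then show ?case using dmod_le_proj by blast
  next case 4 then show ?case using dmod_triangle by force
  next case (5 X Y Z) then show ?case using dmod_behrstock[of X Y Z] assms by force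
  next case 6 then show ?case using dmod_finite far by blast
  next case (7 X Y Z W)
    then show ?case using dmod_mono[of X Z W X Y] far unfolding Yset_def by auto
  next case (8 X Y Z W)
    then show ?case using dmod_mono[of X Z W Z Y] far unfolding Yset_def by auto
  next case (9 X Z)
    then interpret projection_pair Ys dpi xi X Z by unfold_locales
    show ?case by (rule Yfar_Yorder_exists)
  next case (10 X0 X1 Z Y)
    then show ?case using dmod_barrier[of X0 X1 Z "4 * xi" Y] far by auto
  qed
qed (use assms in auto)

end
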